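(* Let $(X,d)$ be a proper geodesic metric space with a distinguished base point $0$, and let $(x_n)$ be a sequence in $X$ converging to a point $\omega\in\partial_d X$ of the metric boundary. Then $(x_n)$ converges to infinity in the Gromov sense, i.e. $\lim_{n,m\to\infty}(x_n\cdot x_m)=\infty$.
   Context: A metric space is proper if closed bounded sets are compact, and geodesic if any two points $x,y$ are joined by an isometric image of $[0,d(x,y)]$. The Gromov product with respect to the base point $0$ is $(x\cdot y)=\tfrac12\big(d(x,0)+d(y,0)-d(x,y)\big)$. For $y\in X$ let $\varphi_y(x)=d(x,0)-d(x,y)$. The metric compactification $\overline{X}^d$ is the maximal ideal space of the commutative unital C*-algebra generated by the continuous functions vanishing at infinity on $X$, the constants, and the functions $\varphi_y$ ($y\in X$); the metric boundary is $\partial_d X=\overline{X}^d\setminus X$. Concretely, a sequence $(x_n)$ in $X$ converges to a point of $\partial_d X$ iff it eventually leaves every compact subset of $X$ and $\varphi_y(x_n)$ converges for every $y\in X$; two such sequences converge to the same boundary point iff the limits of $\varphi_z$ along them agree for every $z\in X$. *)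

theory Defs
  imports "HOL-Analysis.Analysis"
begin

definition proper_space :: "'a::metric_space itself \<Rightarrow> bool" where
  "proper_space _ \<longleftrightarrow> (\<forall>S::'a set. closed S \<and> bounded S \<longrightarrow> compact S)"

definition geodesic_space :: "'a::metric_space itself \<Rightarrow> bool" where
  "geodesic_space _ \<longleftrightarrow> (\<forall>x y::'a. \<exists>\<gamma>::real \<Rightarrow> 'a.
      \<gamma> 0 = x \<and> \<gamma> (dist x y) = y \<and>
      (\<forall>s\<in>{0..dist x y}. \<forall>t\<in>{0..dist x y}. dist (\<gamma> s) (\<gamma> t) = \<bar>s - t\<bar>))"

definition gromov_product :: "'a::metric_space \<Rightarrow> 'a \<Rightarrow> 'a \<Rightarrow> real" where
  "gromov_product b x y = (dist x b + dist y b - dist x y) / 2"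

definition phi :: "'a::metric_space \<Rightarrow> 'a \<Rightarrow> 'a \<Rightarrow> real" where
  "phi b y x = dist x b - dist x y"

text \<open>A sequence converges to some point of the metric boundary (concrete characterization):
  it eventually leaves every compact set, and phi_y(x_n) converges for every y.\<close>
definition converges_to_metric_boundary :: "'a::metric_space \<Rightarrow> (nat \<Rightarrow> 'a) \<Rightarrow> bool" where
  "converges_to_metric_boundary b x \<longleftrightarrow>
     (\<forall>K. compact K \<longrightarrow> (\<forall>\<^sub>F n in sequentially. x n \<notin> K)) \<and>
     (\<forall>y. convergent (\<lambda>n. phi b y (x n)))"

end

theory Submission
  imports Defs
begin

text \<open>Fix a radius \<open>R\<close> with \<open>R - 1/2 \<ge> B\<close>. Since \<open>x\<^sub>n\<close> leaves the compact ball \<open>cball b R\<close>,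
  a geodesic from \<open>b\<close> to \<open>x\<^sub>n\<close> passes through a point \<open>p\<close> of its boundary sphere with
  \<open>\<phi>\<^sub>p(x\<^sub>n) = R\<close>. The functions \<open>p \<mapsto> \<phi>\<^sub>p(x\<^sub>n)\<close> are 1-Lipschitz and converge pointwise, so they
  are uniformly Cauchy on the ball; hence \<open>\<phi>\<^sub>p(x\<^sub>m) > R - 1\<close> for all large \<open>m\<close>, uniformly in \<open>p\<close>.
  Finally \<open>2 (x\<^sub>n \<cdot> x\<^sub>m) \<ge> \<phi>\<^sub>p(x\<^sub>n) + \<phi>\<^sub>p(x\<^sub>m)\<close> by the triangle inequality through \<open>p\<close>.\<close>

lemma gromov_product_ge_phi:
  "(phi b p x + phi b p y) / 2 \<le> gromov_product b x y"
  using dist_triangle[of x y p] unfolding gromov_product_def phi_def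
  by (simp add: dist_commute)

lemma phi_lipschitz: "\<bar>phi b p z - phi b q z\<bar> \<le> dist p q"
  unfolding phi_def by (smt (verit) dist_commute dist_triangle)

lemma geodesic_space_obtain_phi_eq:
  fixes b x :: "'a::metric_space"
  assumes "geodesic_space TYPE('a)" and "0 \<le> r" and "r \<le> dist b x"
  obtains p where "dist p b = r" and "phi b p x = r"
proof -
  obtain g :: "real \<Rightarrow> 'a" where "g 0 = b" and "g (dist b x) = x"
    and iso: "\<forall>s\<in>{0..dist b x}. \<forall>t\<in>{0..dist b x}. dist (g s) (g t) = \<bar>s - t\<bar>"
    using assms(1) unfolding geodesic_space_def by blast
  then have "dist (g r) b = r" and "dist (g r) x = dist b x - r"
    using iso[rule_format, of r 0] iso[rule_format, of r "dist b x"] assms(2,3) by auto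
  then show thesis
    using that[of "g r"] unfolding phi_def by (simp add: dist_commute)
qed

lemma nonexpansive_Cauchy_imp_uniformly_Cauchy_on_compact:
  fixes f :: "nat \<Rightarrow> 'a::metric_space \<Rightarrow> 'b::metric_space"
  assumes "compact K"
    and nonexpansive: "\<And>n p q. dist (f n p) (f n q) \<le> dist p q"
    and Cauchy: "\<And>q. q \<in> K \<Longrightarrow> Cauchy (\<lambda>n. f n q)"
  shows "uniformly_Cauchy_on K f"
  unfolding uniformly_Cauchy_on_def
proof (intro allI impI)
  fix e :: real assume "e > 0"
  have "K \<subseteq> (\<Union>q\<in>K. ball q (e/3))"
    using \<open>e > 0\<close> by auto
  then obtain k where "k \<subseteq> K" "finite k" and net: "K \<subseteq> (\<Union>q\<in>k. ball q (e/3))"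
    using compactE_image[OF \<open>compact K\<close>, of K "\<lambda>q. ball q (e/3)"] by blast
  have "\<forall>q\<in>k. \<forall>\<^sub>F M in sequentially. \<forall>m\<ge>M. \<forall>n\<ge>M. dist (f m q) (f n q) < e/3"
  proof
    fix q assume "q \<in> k"
    then obtain M where "\<forall>m\<ge>M. \<forall>n\<ge>M. dist (f m q) (f n q) < e/3"
      using metric_CauchyD[OF Cauchy[of q]] \<open>k \<subseteq> K\<close> \<open>e > 0\<close> by (meson divide_pos_pos subsetD zero_less_numeral)
    then show "\<forall>\<^sub>F M in sequentially. \<forall>m\<ge>M. \<forall>n\<ge>M. dist (f m q) (f n q) < e/3"
      unfolding eventually_sequentially by (intro exI[of _ M]) auto
  qed
  then have "\<forall>\<^sub>F M in sequentially. \<forall>q\<in>k. \<forall>m\<ge>M. \<forall>n\<ge>M. dist (f m q) (f n q) < e/3"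
    by (rule eventually_ball_finite[OF \<open>finite k\<close>])
  then obtain M where M: "\<And>q m n. q \<in> k \<Longrightarrow> m \<ge> M \<Longrightarrow> n \<ge> M \<Longrightarrow> dist (f m q) (f n q) < e/3"
    unfolding eventually_sequentially by blast
  show "\<exists>M. \<forall>x\<in>K. \<forall>m\<ge>M. \<forall>n\<ge>M. dist (f m x) (f n x) < e"
  proof (intro exI ballI allI impI)
    fix x m n assume "x \<in> K" "m \<ge> M" "n \<ge> M"
    then obtain q where "q \<in> k" and "dist q x < e/3" using net by auto
    have "dist (f m x) (f n x) \<le> dist (f m x) (f m q) + dist (f m q) (f n q) + dist (f n q) (f n x)"
      using dist_triangle[of "f m x" "f n x" "f m q"] dist_triangle[of "f m q" "f n x" "f n q"]
      by linarith
    also have "\<dots> < e/3 + e/3 + e/3"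
      using nonexpansive[of m x q] nonexpansive[of n q x] M[OF \<open>q \<in> k\<close> \<open>m \<ge> M\<close> \<open>n \<ge> M\<close>]
        \<open>dist q x < e/3\<close> by (simp add: dist_commute)
    finally show "dist (f m x) (f n x) < e" by simp
  qed
qed

lemma converges_to_metric_boundary_uniformly_Cauchy_on_compact:
  assumes "converges_to_metric_boundary b x" and "compact K"
  shows "uniformly_Cauchy_on K (\<lambda>n p. phi b p (x n))"
proof (rule nonexpansive_Cauchy_imp_uniformly_Cauchy_on_compact[OF \<open>compact K\<close>])
  show "dist (phi b p (x n)) (phi b q (x n)) \<le> dist p q" for n p q
    using phi_lipschitz by (simp add: dist_real_def)
  show "Cauchy (\<lambda>n. phi b q (x n))" for q
    using assms(1) convergent_Cauchy unfolding converges_to_metric_boundary_def by blast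
qed

lemma converges_to_metric_boundary_eventually_far:
  assumes "proper_space TYPE('a)" and "converges_to_metric_boundary b (x :: nat \<Rightarrow> 'a::metric_space)"
  shows "\<forall>\<^sub>F n in sequentially. r < dist b (x n)"
proof -
  have "compact (cball b r)"
    using assms(1) unfolding proper_space_def by auto
  then have "\<forall>\<^sub>F n in sequentially. x n \<notin> cball b r"
    using assms(2) unfolding converges_to_metric_boundary_def by blast
  then show ?thesis by (simp add: not_le)
qed

theorem mainTheorem2:
  fixes b :: "'a::metric_space" and x :: "nat \<Rightarrow> 'a"
  assumes "proper_space TYPE('a)"
    and "geodesic_space TYPE('a)"
    and "converges_to_metric_boundary b x"
  shows "\<forall>B. \<exists>N. \<forall>n\<ge>N. \<forall>m\<ge>N. gromov_product b (x n) (x m) \<ge> B"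
proof
  fix B :: real
  define R where "R = max B 0 + 1"
  have "0 \<le> R" and "B \<le> R - 1"
    unfolding R_def by auto
  have "compact (cball b R)"
    using assms(1) unfolding proper_space_def by auto
  then obtain N1 where close: "\<And>p n m. p \<in> cball b R \<Longrightarrow> n \<ge> N1 \<Longrightarrow> m \<ge> N1 \<Longrightarrow>
      dist (phi b p (x n)) (phi b p (x m)) < 1"
    using converges_to_metric_boundary_uniformly_Cauchy_on_compact[OF assms(3)]
    unfolding uniformly_Cauchy_on_def by (meson zero_less_one)
  obtain N2 where far: "\<And>n. n \<ge> N2 \<Longrightarrow> R < dist b (x n)"
    using converges_to_metric_boundary_eventually_far[OF assms(1,3)] eventually_sequentially by metis
  show "\<exists>N. \<forall>n\<ge>N. \<forall>m\<ge>N. gromov_product b (x n) (x m) \<ge> B"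
  proof (intro exI allI impI)
    fix n m assume "n \<ge> max N1 N2" "m \<ge> max N1 N2"
    obtain p where "dist p b = R" and "phi b p (x n) = R"
      using geodesic_space_obtain_phi_eq[OF assms(2) \<open>0 \<le> R\<close>, of b "x n"] far[of n]
        \<open>n \<ge> max N1 N2\<close> by force
    then have "p \<in> cball b R"
      by (simp add: dist_commute)
    have "dist (phi b p (x n)) (phi b p (x m)) < 1"
      using close \<open>p \<in> cball b R\<close> \<open>n \<ge> max N1 N2\<close> \<open>m \<ge> max N1 N2\<close> by simp
    then have "phi b p (x m) > R - 1"
      using \<open>phi b p (x n) = R\<close> unfolding dist_real_def by linarith
    then have "B \<le> (phi b p (x n) + phi b p (x m)) / 2"
      using \<open>phi b p (x n) = R\<close> \<open>B \<le> R - 1\<close> by argo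
    then show "gromov_product b (x n) (x m) \<ge> B"
      using gromov_product_ge_phi order_trans by blast
  qed
qed

end
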